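(* Let $n\ge1$, let $0<x_1<x_2<\dots<x_{n+1}<1$, and let $A$ be the $(n+1)\times(n+1)$ Bernstein–Vandermonde matrix, $a_{r,c}=\binom{n}{c-1}x_r^{\,c-1}(1-x_r)^{n-c+1}$. Then the diagonal pivots of the Neville elimination of $A$ are, for $i=1,\dots,n+1$, $$p_{i,i}=\frac{\binom{n}{i-1}(1-x_i)^{n-i+1}\prod_{k=1}^{i-1}(x_i-x_k)}{\prod_{k=1}^{i-1}(1-x_k)}$$ (empty products equal $1$).
   Context: Neville elimination of a nonsingular $N\times N$ matrix $M$: set $M_1=M$ and, for $t=1,\dots,N-1$, obtain $M_{t+1}=(a^{(t+1)}_{i,j})$ from $M_t=(a^{(t)}_{i,j})$ by $a^{(t+1)}_{i,j}=a^{(t)}_{i,j}$ if $i\le t$; $a^{(t+1)}_{i,j}=a^{(t)}_{i,j}-\big(a^{(t)}_{i,t}/a^{(t)}_{i-1,t}\big)a^{(t)}_{i-1,j}$ if $i\ge t+1$ and $j\ge t+1$; and $a^{(t+1)}_{i,j}=0$ otherwise. The pivot $(i,j)$ is $p_{i,j}=a^{(j)}_{i,j}$ for $1\le j\le i\le N$; the diagonal pivots are $p_{i,i}$. *)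

theory Defs
  imports Complex_Main
begin

text \<open>Matrices are functions nat => nat => real, with 1-based indices (rows i, columns j).
 The elimination step t (t >= 1) producing M_(t+1) from M_t.\<close>
definition neville_step :: "nat \<Rightarrow> (nat \<Rightarrow> nat \<Rightarrow> real) \<Rightarrow> (nat \<Rightarrow> nat \<Rightarrow> real)" where
  "neville_step t M = (\<lambda>i j.
     if i \<le> t then M i j
     else if j \<ge> t + 1 then M i j - (M i t / M (i - 1) t) * M (i - 1) j
     else 0)"

text \<open>neville_mat M t = M_t for t >= 1 (with M_1 = M; also M_0 = M by convention).\<close>
fun neville_mat :: "(nat \<Rightarrow> nat \<Rightarrow> real) \<Rightarrow> nat \<Rightarrow> (nat \<Rightarrow> nat \<Rightarrow> real)" where
  "neville_mat M 0 = M"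
| "neville_mat M (Suc t) = (if t = 0 then M else neville_step t (neville_mat M t))"

definition neville_pivot :: "(nat \<Rightarrow> nat \<Rightarrow> real) \<Rightarrow> nat \<Rightarrow> nat \<Rightarrow> real" where
  "neville_pivot M i j = neville_mat M j i j"

definition bernstein_vandermonde :: "nat \<Rightarrow> (nat \<Rightarrow> real) \<Rightarrow> nat \<Rightarrow> nat \<Rightarrow> real" where
  "bernstein_vandermonde n x = (\<lambda>r c. real (n choose (c - 1)) * x r ^ (c - 1) * (1 - x r) ^ (n + 1 - c))"

end

theory Submission
  imports Defs
begin

(* With y_k = x_k / (1 - x_k) the Bernstein-Vandermonde matrix factors as
   diag((1 - x_r)^n) * (y_r^(c-1)) * diag(binom(n, c-1)), and Neville elimination commutes with
   nonsingular diagonal scalings of rows and columns. On the Vandermonde matrix in the distinct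
   nodes y the t-th stage is explicit:
     a^(t)_(i,j) = prod_(k=i-t+1..i-1) (y_i - y_k) * h_(j-t)(y_(i-t+1), ..., y_i),
   h_d the complete homogeneous symmetric polynomial of degree d; the inductive step is the identity
     h_(d+1)(y_(l+1), ..., y_(l+t)) - h_(d+1)(y_l, ..., y_(l+t-1)) = (y_(l+t) - y_l) h_d(y_l, ..., y_(l+t)).
   Hence p_(i,i) = (1 - x_i)^n binom(n, i-1) prod_(k<i) (y_i - y_k), which rearranges to the claim. *)

(* complete_homogeneous y d lo k is h_d(y lo, ..., y (lo + k - 1)), recursing on the last variable. *)
fun complete_homogeneous :: "(nat \<Rightarrow> 'a::comm_ring_1) \<Rightarrow> nat \<Rightarrow> nat \<Rightarrow> nat \<Rightarrow> 'a" where
  "complete_homogeneous y 0 lo k = 1"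
| "complete_homogeneous y (Suc d) lo 0 = 0"
| "complete_homogeneous y (Suc d) lo (Suc k) =
     complete_homogeneous y (Suc d) lo k + y (lo + k) * complete_homogeneous y d lo (Suc k)"

lemma complete_homogeneous_one_var: "complete_homogeneous y d lo (Suc 0) = y lo ^ d"
  by (induction d) auto

lemma complete_homogeneous_Suc_first:
  "complete_homogeneous y (Suc d) lo (Suc k) =
     complete_homogeneous y (Suc d) (Suc lo) k + y lo * complete_homogeneous y d lo (Suc k)"
proof (induction d arbitrary: k)
  case 0
  show ?case by (induction k) (auto simp: algebra_simps)
next
  case (Suc d)
  note outer = Suc.IH
  show ?case
  proof (induction k)
    case 0
    show ?case by simp
  next
    case (Suc k)
    let ?h = "complete_homogeneous y"
    have first: "?h (Suc d) lo (Suc (Suc k)) = ?h (Suc d) (Suc lo) (Suc k) + y lo * ?h d lo (Suc (Suc k))"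
      using outer[of "Suc k"] by simp
    have last: "?h (Suc d) lo (Suc (Suc k)) = ?h (Suc d) lo (Suc k) + y (lo + Suc k) * ?h d lo (Suc (Suc k))"
      by simp
    have drop_first: "?h (Suc d) lo (Suc k) =
        ?h (Suc d) (Suc lo) (Suc k) + y lo * ?h d lo (Suc (Suc k)) - y (lo + Suc k) * ?h d lo (Suc (Suc k))"
      by (metis add_diff_cancel first last)
    have "?h (Suc (Suc d)) lo (Suc (Suc k)) =
        ?h (Suc (Suc d)) (Suc lo) k + y lo * ?h (Suc d) lo (Suc k)
        + y (lo + Suc k) * ?h (Suc d) lo (Suc (Suc k))"
      using Suc.IH by simp
    also have "\<dots> = ?h (Suc (Suc d)) (Suc lo) k + y (lo + Suc k) * ?h (Suc d) (Suc lo) (Suc k)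
        + y lo * ?h (Suc d) lo (Suc (Suc k))"
      by (simp only: drop_first first) (simp add: algebra_simps)
    also have "\<dots> = ?h (Suc (Suc d)) (Suc lo) (Suc k) + y lo * ?h (Suc d) lo (Suc (Suc k))"
      by (simp add: add.commute)
    finally show ?case .
  qed
qed

lemma complete_homogeneous_shift_diff:
  "complete_homogeneous y (Suc d) (Suc lo) k - complete_homogeneous y (Suc d) lo k =
     (y (lo + k) - y lo) * complete_homogeneous y d lo (Suc k)"
  using complete_homogeneous_Suc_first[of y d lo k] by (simp add: algebra_simps)

lemma neville_mat_vandermonde:
  fixes y :: "nat \<Rightarrow> real"
  assumes inj: "inj_on y {1..N}"
    and "1 \<le> t" "t \<le> i" "i \<le> N" "t \<le> j"
  shows "neville_mat (\<lambda>i j. y i ^ (j - 1)) t i j =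
    (\<Prod>k\<in>{i+1-t..<i}. y i - y k) * complete_homogeneous y (j - t) (i + 1 - t) t"
  using assms(2-)
proof (induction t arbitrary: i j rule: nat_induct_at_least)
  case base
  then show ?case by (simp add: complete_homogeneous_one_var)
next
  case (Suc t)
  let ?M = "neville_mat (\<lambda>i j. y i ^ (j - 1)) t"
  let ?P = "\<lambda>i. \<Prod>k\<in>{i+1-t..<i}. y i - y k"
  let ?h = "complete_homogeneous y (j - t)"
  have i: "t < i" "i - 1 + 1 - t = i - t" using Suc by auto
  have Pi_nz: "?P (i - 1) \<noteq> 0"
  proof -
    have "y (i - 1) \<noteq> y k" if "k \<in> {i-t..<i-1}" for k
    proof -
      have "k \<in> {1..N}" "i - 1 \<in> {1..N}" "k \<noteq> i - 1" using that Suc by auto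
      then show ?thesis using inj_onD[OF inj] by metis
    qed
    then show ?thesis using i by auto
  qed
  obtain d where d: "j - t = Suc d" "j - Suc t = d"
    using Suc.prems by (metis Suc_diff_Suc Suc_le_lessD)
  have "neville_mat (\<lambda>i j. y i ^ (j - 1)) (Suc t) i j = ?M i j - ?M i t / ?M (i - 1) t * ?M (i - 1) j"
    using Suc by (simp add: neville_step_def)
  also have "\<dots> = ?P i * ?h (i + 1 - t) t - ?P i / ?P (i - 1) * (?P (i - 1) * ?h (i - t) t)"
    using Suc.IH[of i j] Suc.IH[of i t] Suc.IH[of "i - 1" t] Suc.IH[of "i - 1" j] Suc i by simp
  also have "\<dots> = ?P i * (?h (Suc (i - t)) t - ?h (i - t) t)"
    using Pi_nz i by (simp add: Suc_diff_le right_diff_distrib)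
  also have "\<dots> = ?P i * ((y i - y (i - t)) * complete_homogeneous y d (i - t) (Suc t))"
    using complete_homogeneous_shift_diff[of y d "i - t" t] d i by simp
  also have "\<dots> = (\<Prod>k\<in>{i-t..<i}. y i - y k) * complete_homogeneous y d (i - t) (Suc t)"
    using i Suc.hyps by (simp add: prod.atLeast_Suc_lessThan Suc_diff_le)
  finally show ?case using d by simp
qed

lemma neville_pivot_vandermonde:
  fixes y :: "nat \<Rightarrow> real"
  assumes "inj_on y {1..N}" "1 \<le> i" "i \<le> N"
  shows "neville_pivot (\<lambda>i j. y i ^ (j - 1)) i i = (\<Prod>k\<in>{1..<i}. y i - y k)"
  using neville_mat_vandermonde[OF assms(1), of i i i] assms by (simp add: neville_pivot_def)

(* Only rows 1..N and columns j >= 1 of A enter, and column scalings e j with j >= t are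
   never divided by, so they may vanish. *)
lemma neville_mat_scale:
  assumes A: "\<And>i j. 1 \<le> i \<Longrightarrow> i \<le> N \<Longrightarrow> 1 \<le> j \<Longrightarrow> A i j = d i * M i j * e j"
    and d: "\<And>i. 1 \<le> i \<Longrightarrow> i \<le> N \<Longrightarrow> d i \<noteq> 0"
    and e: "\<And>j. 1 \<le> j \<Longrightarrow> j < t \<Longrightarrow> e j \<noteq> 0"
    and "1 \<le> i" "i \<le> N" "1 \<le> j"
  shows "neville_mat A t i j = d i * neville_mat M t i j * e j"
  using e assms(4-)
proof (induction t arbitrary: i j)
  case 0
  then show ?case using A by simp
next
  case (Suc t)
  show ?case
  proof (cases "t = 0 \<or> i \<le> t \<or> j < t + 1")
    case True
    then show ?thesis using Suc A by (auto simp: neville_step_def)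
  next
    case False
    have IH: "neville_mat A t i' j' = d i' * neville_mat M t i' j' * e j'"
      if "i' \<in> {i - 1, i}" "j' \<in> {t, j}" for i' j'
      using Suc.IH[of i' j'] Suc.prems False that by auto
    have nz: "d (i - 1) \<noteq> 0" "e t \<noteq> 0" using d Suc.prems False by auto
    show ?thesis
      using False IH nz
      by (cases "neville_mat M t (i - 1) t = 0") (auto simp: neville_step_def field_simps)
  qed
qed

lemma neville_pivot_scale:
  assumes "\<And>i j. 1 \<le> i \<Longrightarrow> i \<le> N \<Longrightarrow> 1 \<le> j \<Longrightarrow> A i j = d i * M i j * e j"
    and "\<And>i. 1 \<le> i \<Longrightarrow> i \<le> N \<Longrightarrow> d i \<noteq> 0"
    and "\<And>j. 1 \<le> j \<Longrightarrow> j < i \<Longrightarrow> e j \<noteq> 0"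
    and "1 \<le> i" "i \<le> N"
  shows "neville_pivot A i i = d i * neville_pivot M i i * e i"
  using neville_mat_scale[of N A d M e i i i] assms by (simp add: neville_pivot_def)

lemma bernstein_vandermonde_eq_scaled_vandermonde:
  assumes "x r \<noteq> 1" "1 \<le> c"
  shows "bernstein_vandermonde n x r c = (1 - x r) ^ n * (x r / (1 - x r)) ^ (c - 1) * real (n choose (c - 1))"
proof (cases "c \<le> n + 1")
  case True
  have "(1 - x r) ^ n = (1 - x r) ^ (c - 1) * (1 - x r) ^ (n + 1 - c)"
    using True assms(2) by (simp flip: power_add)
  then show ?thesis using assms(1) by (simp add: bernstein_vandermonde_def power_divide)
next
  case False
  then show ?thesis by (simp add: bernstein_vandermonde_def binomial_eq_0)
qed

lemma odds_diff_prod: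
  fixes s :: real and t :: "nat \<Rightarrow> real"
  assumes "finite K" "card K \<le> n" "s \<noteq> 1" "\<And>k. k \<in> K \<Longrightarrow> t k \<noteq> 1"
  shows "(1 - s) ^ n * (\<Prod>k\<in>K. s / (1 - s) - t k / (1 - t k)) =
    (1 - s) ^ (n - card K) * (\<Prod>k\<in>K. s - t k) / (\<Prod>k\<in>K. 1 - t k)"
proof -
  have "(\<Prod>k\<in>K. s / (1 - s) - t k / (1 - t k)) = (\<Prod>k\<in>K. (s - t k) / ((1 - s) * (1 - t k)))"
    using assms(3,4) by (intro prod.cong) (auto simp: field_simps)
  also have "\<dots> = (\<Prod>k\<in>K. s - t k) / ((1 - s) ^ card K * (\<Prod>k\<in>K. 1 - t k))"
    by (simp add: prod_dividef prod.distrib)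
  finally have "(1 - s) ^ n * (\<Prod>k\<in>K. s / (1 - s) - t k / (1 - t k)) =
      (1 - s) ^ (n - card K) * (1 - s) ^ card K * ((\<Prod>k\<in>K. s - t k) / ((1 - s) ^ card K * (\<Prod>k\<in>K. 1 - t k)))"
    using assms(2) by (simp flip: power_add)
  then show ?thesis
    using assms(3) by simp
qed

lemma neville_pivot_bernstein_vandermonde:
  fixes x :: "nat \<Rightarrow> real"
  assumes inj: "inj_on x {1..n+1}" and x_ne_1: "\<And>k. k \<in> {1..n+1} \<Longrightarrow> x k \<noteq> 1"
    and i: "i \<in> {1..n+1}"
  shows "neville_pivot (bernstein_vandermonde n x) i i =
    real (n choose (i - 1)) * (1 - x i) ^ (n + 1 - i) * (\<Prod>k=1..i-1. (x i - x k))
    / (\<Prod>k=1..i-1. (1 - x k))"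
proof -
  define y where "y k = x k / (1 - x k)" for k
  have inj_y: "inj_on y {1..n+1}"
  proof (rule inj_onI)
    fix k l assume kl: "k \<in> {1..n+1}" "l \<in> {1..n+1}" and "y k = y l"
    then have "x k * (1 - x l) = x l * (1 - x k)" using x_ne_1 by (simp add: y_def frac_eq_eq)
    then have "x k = x l" by (simp add: algebra_simps)
    then show "k = l" using inj_onD[OF inj] kl by blast
  qed
  have "neville_pivot (bernstein_vandermonde n x) i i =
      (1 - x i) ^ n * neville_pivot (\<lambda>i j. y i ^ (j - 1)) i i * real (n choose (i - 1))"
    using i x_ne_1
    by (intro neville_pivot_scale[where N = "n + 1" and d = "\<lambda>i. (1 - x i) ^ n"
          and e = "\<lambda>j. real (n choose (j - 1))"])
       (auto simp: y_def bernstein_vandermonde_eq_scaled_vandermonde)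
  also have "neville_pivot (\<lambda>i j. y i ^ (j - 1)) i i = (\<Prod>k\<in>{1..<i}. y i - y k)"
    using inj_y i by (intro neville_pivot_vandermonde) auto
  also have "(1 - x i) ^ n * (\<Prod>k\<in>{1..<i}. y i - y k) =
      (1 - x i) ^ (n + 1 - i) * (\<Prod>k\<in>{1..<i}. x i - x k) / (\<Prod>k\<in>{1..<i}. 1 - x k)"
    unfolding y_def using i x_ne_1 by (subst odds_diff_prod) auto
  also have "{1..<i} = {1..i-1}" using i by auto
  finally show ?thesis by (simp add: mult_ac)
qed

theorem mainTheorem7:
  fixes n :: nat and x :: "nat \<Rightarrow> real"
  assumes "n \<ge> 1"
    and "0 < x 1"
    and "\<And>k. 1 \<le> k \<Longrightarrow> k \<le> n \<Longrightarrow> x k < x (k + 1)"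
    and "x (n + 1) < 1"
  shows "\<forall>i\<in>{1..n+1}.
     neville_pivot (bernstein_vandermonde n x) i i =
       real (n choose (i - 1)) * (1 - x i) ^ (n + 1 - i) * (\<Prod>k=1..i-1. (x i - x k))
       / (\<Prod>k=1..i-1. (1 - x k))"
proof -
  have mono: "strict_mono_on {1..n+1} x"
    by (rule strict_mono_onI, rule lift_Suc_mono_less_ivl[of "{1..n}"]) (use assms(3) in auto)
  have "x k \<noteq> 1" if "k \<in> {1..n+1}" for k
    using strict_mono_on_less_eq[OF mono that, of "n + 1"] that assms(4) by auto
  then show ?thesis
    using neville_pivot_bernstein_vandermonde strict_mono_on_imp_inj_on[OF mono] by blast
qed

end
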